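(* For the impulsive system $\dot S=S(A-S)-\beta_0 IS$, $\dot I=\beta_0 IS-(\sigma+g)I$ ($t\ne nT$), $S(nT)=(1-p)S(nT^-)$, $I(nT)=I(nT^-)$, let $$\mathcal{R}_p=\frac{\beta_0}{\sigma+g}\frac1T\int_0^T\mathcal{S}(t)\,dt,\qquad \mathcal{S}(t)=\frac{A[e^{AT}(1-p)-1]}{e^{AT}(1-p)-1+pe^{A(T-t)}}\ (0\le t<T).$$ For $p\in[0,1)$ and $T>0$: (1) $\mathcal{R}_p=\mathcal{R}_0\left[\frac{\ln(1-p)}{AT}+1\right]$; (2) if $\mathcal{R}_p=1$, then the map $F_I(y)=y\exp\left\{\beta_0\int_0^T\mathcal{S}(t)\,dt\right\}e^{-(\sigma+g)T}$ has infinitely many fixed points; (3) for $T>0$ and $p>0$, $\frac{\partial\mathcal{R}_p}{\partial T}>0$ and $\frac{\partial\mathcal{R}_p}{\partial p}<0$; (4) $\lim_{T\to+\infty}\mathcal{R}_p=\mathcal{R}_0$; (5) if $p=0$ then $\mathcal{R}_p=\mathcal{R}_0$.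
   Context: Parameters: $A\in(0,1]$, $\beta_0>0$, $\sigma,g\ge0$ with $\sigma+g>0$; $\mathcal{R}_0=A\beta_0/(\sigma+g)$. $F_I$ is the time-$T$ stroboscopic map of the Infectious variable along the disease-free periodic solution $\mathcal{S}$ (extended $T$-periodically). *)

theory Defs
  imports "HOL-Analysis.Analysis"
begin

text \<open>Disease-free periodic solution on one period, 0 \<le> t < T.\<close>
definition Sdf :: "real \<Rightarrow> real \<Rightarrow> real \<Rightarrow> real \<Rightarrow> real" where
  "Sdf A p T t = A * (exp (A*T) * (1 - p) - 1) / (exp (A*T) * (1 - p) - 1 + p * exp (A * (T - t)))"

definition R0 :: "real \<Rightarrow> real \<Rightarrow> real \<Rightarrow> real \<Rightarrow> real" where
  "R0 A \<beta>0 \<sigma> g = A * \<beta>0 / (\<sigma> + g)"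

definition Rp :: "real \<Rightarrow> real \<Rightarrow> real \<Rightarrow> real \<Rightarrow> real \<Rightarrow> real \<Rightarrow> real" where
  "Rp A \<beta>0 \<sigma> g p T = \<beta>0 / (\<sigma> + g) * (1 / T) * integral {0..T} (Sdf A p T)"

text \<open>Stroboscopic map of the infectious variable along the disease-free solution.\<close>
definition F_I :: "real \<Rightarrow> real \<Rightarrow> real \<Rightarrow> real \<Rightarrow> real \<Rightarrow> real \<Rightarrow> real \<Rightarrow> real" where
  "F_I A \<beta>0 \<sigma> g p T y = y * exp (\<beta>0 * integral {0..T} (Sdf A p T)) * exp (- (\<sigma> + g) * T)"

end

theory Submission
  imports Defs
begin

text \<open>
  With \<open>E = exp (A T)\<close>, the denominator of the disease-free solution is
  \<open>d t = E (1 - p) - 1 + p exp (A (T - t))\<close>, and the solution equals \<open>A + (ln d)'\<close>.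
  Its integral over a period is therefore \<open>A T + ln (d T / d 0) = A T + ln (1 - p)\<close>,
  which gives the closed form of \<open>Rp\<close>; monotonicity and the limit are read off from it.
  When \<open>Rp = 1\<close> the two exponentials in \<open>F_I\<close> cancel, so every \<open>y\<close> is a fixed point.
\<close>

definition Sdf_denom :: "real \<Rightarrow> real \<Rightarrow> real \<Rightarrow> real \<Rightarrow> real" where
  "Sdf_denom A p T t = exp (A*T) * (1 - p) - 1 + p * exp (A * (T - t))"

lemma Sdf_denom_at_T: "Sdf_denom A p T T = (exp (A*T) - 1) * (1 - p)"
  by (simp add: Sdf_denom_def algebra_simps)

lemma Sdf_denom_at_0: "Sdf_denom A p T 0 = exp (A*T) - 1"
  by (simp add: Sdf_denom_def algebra_simps)

lemma Sdf_denom_pos: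
  fixes A p T t :: real
  assumes "0 < A" "0 \<le> p" "p < 1" "0 < T" "t \<le> T"
  shows "0 < Sdf_denom A p T t"
proof -
  have "0 < (exp (A*T) - 1) * (1 - p)"
    using assms by simp
  also have "\<dots> = Sdf_denom A p T T"
    by (simp add: Sdf_denom_at_T)
  also have "\<dots> \<le> Sdf_denom A p T t"
    using assms by (simp add: Sdf_denom_def mult_le_cancel_left1)
  finally show ?thesis .
qed

lemma Sdf_eq_denom: "Sdf A p T t = A * (exp (A*T) * (1 - p) - 1) / Sdf_denom A p T t"
  by (simp add: Sdf_def Sdf_denom_def)

lemma has_real_derivative_Sdf_antiderivative:
  fixes A p T t :: real
  assumes "0 < A" "0 \<le> p" "p < 1" "0 < T" "t \<le> T"
  shows "((\<lambda>t. A * t + ln (Sdf_denom A p T t)) has_real_derivative Sdf A p T t) (at t)"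
proof -
  have d: "0 < Sdf_denom A p T t"
    using Sdf_denom_pos[OF assms] .
  have "((\<lambda>t. A * t + ln (Sdf_denom A p T t)) has_real_derivative
          A + (- (p * exp (A * (T - t)) * A)) / Sdf_denom A p T t) (at t)"
    using d by (auto intro!: derivative_eq_intros simp: Sdf_denom_def)
  also have "A + (- (p * exp (A * (T - t)) * A)) / Sdf_denom A p T t = Sdf A p T t"
    using d by (simp add: Sdf_eq_denom field_simps) (simp add: Sdf_denom_def algebra_simps)
  finally show ?thesis .
qed

lemma integral_Sdf:
  fixes A p T :: real
  assumes "0 < A" "0 \<le> p" "p < 1" "0 < T"
  shows "integral {0..T} (Sdf A p T) = A * T + ln (1 - p)"
proof -
  have "(Sdf A p T has_integral
          (A * T + ln (Sdf_denom A p T T)) - (A * 0 + ln (Sdf_denom A p T 0))) {0..T}"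
    using assms has_real_derivative_Sdf_antiderivative[OF assms]
    by (intro fundamental_theorem_of_calculus)
       (auto simp: has_real_derivative_iff_has_vector_derivative[symmetric]
             intro: has_field_derivative_at_within)
  moreover have "exp (A*T) > 1"
    using assms by simp
  ultimately show ?thesis
    using assms by (simp add: integral_unique ln_mult Sdf_denom_at_T Sdf_denom_at_0)
qed

lemma Rp_closed_form:
  fixes A \<beta>0 \<sigma> g p T :: real
  assumes "0 < A" "0 \<le> p" "p < 1" "0 < T"
  shows "Rp A \<beta>0 \<sigma> g p T = R0 A \<beta>0 \<sigma> g * (ln (1 - p) / (A * T) + 1)"
proof -
  have "1 / T * (A * T + ln (1 - p)) = A * (ln (1 - p) / (A * T) + 1)"
    using assms by (simp add: field_simps)
  then show ?thesis
    unfolding Rp_def R0_def integral_Sdf[OF assms]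
    by (simp only: mult.assoc times_divide_eq_left) (simp only: mult.left_commute)
qed

lemma F_I_eq_id_if_Rp_eq_1:
  assumes "Rp A \<beta>0 \<sigma> g p T = 1"
  shows "F_I A \<beta>0 \<sigma> g p T y = y"
proof -
  \<comment> \<open>No side conditions: \<open>x / 0 = 0\<close>, so \<open>Rp = 1\<close> already forces \<open>\<sigma> + g \<noteq> 0\<close> and \<open>T \<noteq> 0\<close>.\<close>
  have "\<beta>0 * integral {0..T} (Sdf A p T) = (\<sigma> + g) * T"
    using assms by (cases "\<sigma> + g = 0"; cases "T = 0") (auto simp: Rp_def field_simps)
  then show ?thesis
    by (simp add: F_I_def algebra_simps flip: exp_add)
qed

lemma R0_pos:
  assumes "0 < A" "0 < \<beta>0" "0 < \<sigma> + g"
  shows "0 < R0 A \<beta>0 \<sigma> g"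
  using assms by (simp add: R0_def)

lemma Rp_has_derivative_in_T:
  fixes A \<beta>0 \<sigma> g p T :: real
  assumes "0 < A" "0 \<le> p" "p < 1" "0 < T"
  shows "((\<lambda>T. Rp A \<beta>0 \<sigma> g p T) has_real_derivative
           R0 A \<beta>0 \<sigma> g * (- ln (1 - p) / (A * T\<^sup>2))) (at T)"
proof -
  have "((\<lambda>T. R0 A \<beta>0 \<sigma> g * (ln (1 - p) / (A * T) + 1)) has_real_derivative
           R0 A \<beta>0 \<sigma> g * (- ln (1 - p) / (A * T\<^sup>2))) (at T)"
    using assms by (auto intro!: derivative_eq_intros simp: power2_eq_square field_simps)
  then show ?thesis
    by (rule has_field_derivative_transform_within_open[of _ _ _ "{0<..}"])
       (use assms in \<open>auto simp: Rp_closed_form\<close>)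
qed

lemma Rp_has_derivative_in_p:
  fixes A \<beta>0 \<sigma> g p T :: real
  assumes "0 < A" "0 < p" "p < 1" "0 < T"
  shows "((\<lambda>p. Rp A \<beta>0 \<sigma> g p T) has_real_derivative
           R0 A \<beta>0 \<sigma> g * (- 1 / ((1 - p) * (A * T)))) (at p)"
proof -
  have "((\<lambda>p. R0 A \<beta>0 \<sigma> g * (ln (1 - p) / (A * T) + 1)) has_real_derivative
           R0 A \<beta>0 \<sigma> g * (- 1 / ((1 - p) * (A * T)))) (at p)"
    using assms by (auto intro!: derivative_eq_intros simp: field_simps)
  then show ?thesis
    by (rule has_field_derivative_transform_within_open[of _ _ _ "{0<..<1}"])
       (use assms in \<open>auto simp: Rp_closed_form\<close>)
qed

lemma Rp_tendsto_R0_at_top: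
  fixes A \<beta>0 \<sigma> g p :: real
  assumes "0 < A" "0 \<le> p" "p < 1"
  shows "((\<lambda>T. Rp A \<beta>0 \<sigma> g p T) \<longlongrightarrow> R0 A \<beta>0 \<sigma> g) at_top"
proof -
  have "filterlim (\<lambda>T. A * T) at_top at_top"
    using assms(1) by (intro filterlim_tendsto_pos_mult_at_top[OF tendsto_const] filterlim_ident)
  then have "((\<lambda>T. ln (1 - p) / (A * T)) \<longlongrightarrow> 0) at_top"
    by (intro tendsto_divide_0[OF tendsto_const] filterlim_at_top_imp_at_infinity)
  then have "((\<lambda>T. R0 A \<beta>0 \<sigma> g * (ln (1 - p) / (A * T) + 1)) \<longlongrightarrow> R0 A \<beta>0 \<sigma> g * (0 + 1)) at_top"
    by (intro tendsto_intros)
  moreover have "eventually (\<lambda>T. R0 A \<beta>0 \<sigma> g * (ln (1 - p) / (A * T) + 1) = Rp A \<beta>0 \<sigma> g p T) at_top"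
    using eventually_gt_at_top[of 0] by eventually_elim (use assms in \<open>simp add: Rp_closed_form\<close>)
  ultimately show ?thesis
    by (simp add: tendsto_cong)
qed

theorem lemma7:
  fixes A \<beta>0 \<sigma> g :: real
  assumes "0 < A" "A \<le> 1" "0 < \<beta>0" "0 \<le> \<sigma>" "0 \<le> g" "0 < \<sigma> + g"
  shows
    "(\<forall>p T. 0 \<le> p \<and> p < 1 \<and> 0 < T \<longrightarrow>
        Rp A \<beta>0 \<sigma> g p T = R0 A \<beta>0 \<sigma> g * (ln (1 - p) / (A * T) + 1))
   \<and> (\<forall>p T. 0 \<le> p \<and> p < 1 \<and> 0 < T \<and> Rp A \<beta>0 \<sigma> g p T = 1 \<longrightarrow>
        infinite {y::real. 0 \<le> y \<and> F_I A \<beta>0 \<sigma> g p T y = y})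
   \<and> (\<forall>p T. 0 < p \<and> p < 1 \<and> 0 < T \<longrightarrow>
        (\<exists>D. ((\<lambda>T'. Rp A \<beta>0 \<sigma> g p T') has_real_derivative D) (at T) \<and> D > 0)
      \<and> (\<exists>D. ((\<lambda>p'. Rp A \<beta>0 \<sigma> g p' T) has_real_derivative D) (at p) \<and> D < 0))
   \<and> (\<forall>p. 0 \<le> p \<and> p < 1 \<longrightarrow>
        ((\<lambda>T. Rp A \<beta>0 \<sigma> g p T) \<longlongrightarrow> R0 A \<beta>0 \<sigma> g) at_top)
   \<and> (\<forall>T. 0 < T \<longrightarrow> Rp A \<beta>0 \<sigma> g 0 T = R0 A \<beta>0 \<sigma> g)"
proof (intro conjI allI impI)
  have R0: "0 < R0 A \<beta>0 \<sigma> g"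
    using assms by (intro R0_pos) auto
  show "Rp A \<beta>0 \<sigma> g p T = R0 A \<beta>0 \<sigma> g * (ln (1 - p) / (A * T) + 1)"
    if "0 \<le> p \<and> p < 1 \<and> 0 < T" for p T
    using assms that by (simp add: Rp_closed_form)
  show "infinite {y::real. 0 \<le> y \<and> F_I A \<beta>0 \<sigma> g p T y = y}"
    if "0 \<le> p \<and> p < 1 \<and> 0 < T \<and> Rp A \<beta>0 \<sigma> g p T = 1" for p T
    using that by (simp add: F_I_eq_id_if_Rp_eq_1 atLeast_def[symmetric] infinite_Ici)
  show "\<exists>D. ((\<lambda>T'. Rp A \<beta>0 \<sigma> g p T') has_real_derivative D) (at T) \<and> D > 0"
    if "0 < p \<and> p < 1 \<and> 0 < T" for p T
    using that assms R0 Rp_has_derivative_in_T[of A p T]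
    by (intro exI[of _ "R0 A \<beta>0 \<sigma> g * (- ln (1 - p) / (A * T\<^sup>2))"])
       (auto simp: mult_pos_neg divide_neg_pos)
  show "\<exists>D. ((\<lambda>p'. Rp A \<beta>0 \<sigma> g p' T) has_real_derivative D) (at p) \<and> D < 0"
    if "0 < p \<and> p < 1 \<and> 0 < T" for p T
    using that assms R0 Rp_has_derivative_in_p[of A p T]
    by (intro exI[of _ "R0 A \<beta>0 \<sigma> g * (- 1 / ((1 - p) * (A * T)))"])
       (auto intro!: mult_pos_neg)
  show "((\<lambda>T. Rp A \<beta>0 \<sigma> g p T) \<longlongrightarrow> R0 A \<beta>0 \<sigma> g) at_top" if "0 \<le> p \<and> p < 1" for p
    using assms that by (simp add: Rp_tendsto_R0_at_top)
  show "Rp A \<beta>0 \<sigma> g 0 T = R0 A \<beta>0 \<sigma> g" if "0 < T" for T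
    using assms that by (simp add: Rp_closed_form)
qed

end
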